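(* Let $S$ be an idempotent semiring satisfying the identity $x+xyx+x\approx x$. Then the relation $\sigma$ on $S$ defined by $a\,\sigma\, b$ if and only if $aba=aba+a+aba$ and $bab=bab+b+bab$ is itself the least distributive lattice congruence on $S$.
   Context: An idempotent semiring is an algebra $(S,+,\cdot)$ with two binary operations such that $(S,+)$ and $(S,\cdot)$ are bands (associative, with $x+x=x$ and $xx=x$), and both distributive laws $x(y+z)=xy+xz$ and $(x+y)z=xz+yz$ hold; addition is not assumed commutative. A distributive lattice congruence on $S$ is a congruence $\rho$ such that $S/\rho$ is a distributive lattice, i.e. $S/\rho$ satisfies $x+y\approx y+x$, $xy\approx yx$ and $x+xy\approx x$. *)

theory Defs
  imports Main
begin

definition idempotent_semiring :: "('a \<Rightarrow> 'a \<Rightarrow> 'a) \<Rightarrow> ('a \<Rightarrow> 'a \<Rightarrow> 'a) \<Rightarrow> bool" where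
  "idempotent_semiring add mul \<longleftrightarrow>
     (\<forall>x y z. add (add x y) z = add x (add y z)) \<and> (\<forall>x. add x x = x) \<and>
     (\<forall>x y z. mul (mul x y) z = mul x (mul y z)) \<and> (\<forall>x. mul x x = x) \<and>
     (\<forall>x y z. mul x (add y z) = add (mul x y) (mul x z)) \<and>
     (\<forall>x y z. mul (add x y) z = add (mul x z) (mul y z))"

definition semiring_congruence :: "('a \<Rightarrow> 'a \<Rightarrow> 'a) \<Rightarrow> ('a \<Rightarrow> 'a \<Rightarrow> 'a) \<Rightarrow> ('a \<Rightarrow> 'a \<Rightarrow> bool) \<Rightarrow> bool" where
  "semiring_congruence add mul r \<longleftrightarrow>
     equivp r \<and>
     (\<forall>a b c d. r a b \<and> r c d \<longrightarrow> r (add a c) (add b d)) \<and>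
     (\<forall>a b c d. r a b \<and> r c d \<longrightarrow> r (mul a c) (mul b d))"

text \<open>A distributive lattice congruence: a congruence whose quotient satisfies
x+y = y+x, xy = yx, x + xy = x (identities checked on representatives).\<close>
definition dl_congruence :: "('a \<Rightarrow> 'a \<Rightarrow> 'a) \<Rightarrow> ('a \<Rightarrow> 'a \<Rightarrow> 'a) \<Rightarrow> ('a \<Rightarrow> 'a \<Rightarrow> bool) \<Rightarrow> bool" where
  "dl_congruence add mul r \<longleftrightarrow>
     semiring_congruence add mul r \<and>
     (\<forall>x y. r (add x y) (add y x)) \<and>
     (\<forall>x y. r (mul x y) (mul y x)) \<and>
     (\<forall>x y. r (add x (mul x y)) x)"

end

theory Submission
  imports Defs
begin

text \<open>
  Write \<open>x \<le> y\<close> for \<open>y + x + y = y\<close>, the natural preorder of the additive band; it is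
  compatible with both operations and the identity says \<open>xyx \<le> x\<close>. Modulo the equivalence
  \<open>D\<close> of this preorder the multiplicative reduct is again a band, and \<open>\<sigma>\<close> is Green's
  \<open>J\<close>-relation of that band: \<open>a \<sigma> b\<close> iff \<open>aba D a\<close> and \<open>bab D b\<close>. The \<open>J\<close>-relation of a
  band is a congruence with commutative quotient; compatibility with addition and the
  absorption law \<open>x + xy \<sigma> x\<close> then follow from monotonicity of \<open>\<le>\<close> and \<open>xyx \<le> x\<close>.
  Conversely, a distributive lattice congruence \<open>\<rho>\<close> identifies \<open>aba\<close> with \<open>ab\<close>, so
  \<open>aba = aba + a + aba\<close> gives \<open>ab \<rho> ab + a + ab \<rho> a + ab \<rho> a\<close>; hence
  \<open>a \<rho> ab \<rho> ba \<rho> b\<close>.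
\<close>

locale band_mod =
  fixes mult :: "'a \<Rightarrow> 'a \<Rightarrow> 'a" (infixr "\<cdot>" 70)
    and R :: "'a \<Rightarrow> 'a \<Rightarrow> bool"
  assumes mult_assoc: "(x \<cdot> y) \<cdot> z = x \<cdot> y \<cdot> z"
    and mult_idem: "x \<cdot> x = x"
    and equivp_R: "equivp R"
    and R_mult_left: "R x y \<Longrightarrow> R (z \<cdot> x) (z \<cdot> y)"
    and R_mult_right: "R x y \<Longrightarrow> R (x \<cdot> z) (y \<cdot> z)"
begin

lemma R_refl: "R x x"
  using equivp_R by (rule equivp_reflp)

lemma R_sym: "R x y \<Longrightarrow> R y x"
  using equivp_R by (rule equivp_symp)

lemma R_trans: "R x y \<Longrightarrow> R y z \<Longrightarrow> R x z"
  using equivp_R by (rule equivp_transp)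

text \<open>\<open>absorbs y x\<close> says that \<open>y\<close> lies \<open>J\<close>-below \<open>x\<close> in the band of \<open>R\<close>-classes.\<close>

definition absorbs :: "'a \<Rightarrow> 'a \<Rightarrow> bool" where
  "absorbs y x \<longleftrightarrow> R (y \<cdot> x \<cdot> y) y"

definition absorb_equiv :: "'a \<Rightarrow> 'a \<Rightarrow> bool" where
  "absorb_equiv x y \<longleftrightarrow> absorbs x y \<and> absorbs y x"

lemma absorbs_refl: "absorbs x x"
  by (simp add: absorbs_def mult_idem R_refl)

lemma absorbs_if_R: "R x y \<Longrightarrow> absorbs y x"
  unfolding absorbs_def using R_mult_left[OF R_mult_right, of x y y y]
  by (simp add: mult_assoc mult_idem)

lemma absorbs_trans:
  assumes uv: "absorbs u v" and vw: "absorbs v w"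
  shows "absorbs u w"
proof -
  have "R (u \<cdot> v \<cdot> w \<cdot> v \<cdot> u) (u \<cdot> v \<cdot> u)"
    using R_mult_left[OF R_mult_right, OF vw[unfolded absorbs_def]] by (simp add: mult_assoc)
  then have uvwvu: "R (u \<cdot> v \<cdot> w \<cdot> v \<cdot> u) u"
    using uv unfolding absorbs_def by (rule R_trans)
  have "u \<cdot> v \<cdot> w \<cdot> v \<cdot> u = (u \<cdot> v \<cdot> w \<cdot> v \<cdot> u) \<cdot> w \<cdot> v \<cdot> u"
    by (metis mult_assoc mult_idem)
  with R_mult_right[OF uvwvu, of "w \<cdot> v \<cdot> u"] have "R (u \<cdot> v \<cdot> w \<cdot> v \<cdot> u) (u \<cdot> w \<cdot> v \<cdot> u)"
    by (simp add: mult_assoc)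
  with uvwvu have uwvu: "R (u \<cdot> w \<cdot> v \<cdot> u) u"
    by (metis R_sym R_trans)
  have "R (u \<cdot> w \<cdot> u \<cdot> w \<cdot> v \<cdot> u) (u \<cdot> w \<cdot> u)"
    using R_mult_left[OF uwvu, of "u \<cdot> w"] by (simp add: mult_assoc)
  moreover have "u \<cdot> w \<cdot> u \<cdot> w \<cdot> v \<cdot> u = u \<cdot> w \<cdot> v \<cdot> u"
    by (metis mult_assoc mult_idem)
  ultimately show ?thesis
    unfolding absorbs_def using uwvu by (metis R_sym R_trans)
qed

lemma absorbs_mult_factor_left: "absorbs (x \<cdot> y) x"
  unfolding absorbs_def by (metis R_refl mult_assoc mult_idem)

lemma absorbs_mult_factor_right: "absorbs (x \<cdot> y) y"
  unfolding absorbs_def by (metis R_refl mult_assoc mult_idem)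

lemma absorbs_mult:
  assumes uv: "absorbs u v" and uw: "absorbs u w"
  shows "absorbs u (v \<cdot> w)"
proof -
  have "absorbs (u \<cdot> v) w"
    using absorbs_mult_factor_left uw by (rule absorbs_trans)
  then have "R (u \<cdot> v \<cdot> w \<cdot> u \<cdot> v \<cdot> u) (u \<cdot> v \<cdot> u)"
    unfolding absorbs_def using R_mult_right[of _ _ u] by (metis mult_assoc)
  moreover have "R (u \<cdot> v \<cdot> w \<cdot> u) (u \<cdot> v \<cdot> w \<cdot> u \<cdot> v \<cdot> u)"
    using R_mult_left[OF R_sym[OF uv[unfolded absorbs_def]], of "u \<cdot> v \<cdot> w"]
    by (simp add: mult_assoc)
  ultimately show ?thesis
    using uv unfolding absorbs_def by (metis R_trans mult_assoc)
qed

lemma absorbs_mult_mono: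
  assumes "absorbs a b" and "absorbs c d"
  shows "absorbs (a \<cdot> c) (b \<cdot> d)"
  using absorbs_trans[OF absorbs_mult_factor_left assms(1)]
    absorbs_trans[OF absorbs_mult_factor_right assms(2)]
  by (rule absorbs_mult)

lemma equivp_absorb_equiv: "equivp absorb_equiv"
  by (rule equivpI) (auto simp: reflp_def symp_def transp_def absorb_equiv_def
      intro: absorbs_refl absorbs_trans)

lemma absorb_equiv_mult:
  "absorb_equiv a b \<Longrightarrow> absorb_equiv c d \<Longrightarrow> absorb_equiv (a \<cdot> c) (b \<cdot> d)"
  by (simp add: absorb_equiv_def absorbs_mult_mono)

lemma absorb_equiv_if_R: "R x y \<Longrightarrow> absorb_equiv x y"
  by (simp add: absorb_equiv_def absorbs_if_R R_sym)

lemma absorb_equiv_commute: "absorb_equiv (x \<cdot> y) (y \<cdot> x)"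
  by (simp add: absorb_equiv_def absorbs_mult absorbs_mult_factor_left absorbs_mult_factor_right)

end

locale idem_semiring =
  fixes add :: "'a \<Rightarrow> 'a \<Rightarrow> 'a" (infixr "\<oplus>" 65)
    and mul :: "'a \<Rightarrow> 'a \<Rightarrow> 'a" (infixr "\<otimes>" 70)
  assumes idempotent_semiring: "idempotent_semiring add mul"
begin

lemma add_assoc: "(x \<oplus> y) \<oplus> z = x \<oplus> y \<oplus> z"
  and add_idem: "x \<oplus> x = x"
  and mul_assoc: "(x \<otimes> y) \<otimes> z = x \<otimes> y \<otimes> z"
  and mul_idem: "x \<otimes> x = x"
  and distrib_left: "x \<otimes> (y \<oplus> z) = x \<otimes> y \<oplus> x \<otimes> z"
  and distrib_right: "(x \<oplus> y) \<otimes> z = x \<otimes> z \<oplus> y \<otimes> z"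
  using idempotent_semiring unfolding idempotent_semiring_def by blast+

sublocale A: band_mod add "(=)"
  by unfold_locales (simp_all add: add_assoc add_idem identity_equivp)

lemma A_absorbs_mult_left: "A.absorbs y x \<Longrightarrow> A.absorbs (z \<otimes> y) (z \<otimes> x)"
  unfolding A.absorbs_def by (simp add: distrib_left[symmetric])

lemma A_absorbs_mult_right: "A.absorbs y x \<Longrightarrow> A.absorbs (y \<otimes> z) (x \<otimes> z)"
  unfolding A.absorbs_def by (simp add: distrib_right[symmetric])

lemma A_absorbs_mult_mono:
  assumes "A.absorbs a b" and "A.absorbs c d"
  shows "A.absorbs (a \<otimes> c) (b \<otimes> d)"
  using A_absorbs_mult_right[OF assms(1)] A_absorbs_mult_left[OF assms(2)]
  by (rule A.absorbs_trans)

sublocale M: band_mod mul A.absorb_equiv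
  by unfold_locales
    (auto simp: mul_assoc mul_idem A.equivp_absorb_equiv A.absorb_equiv_def
      A_absorbs_mult_left A_absorbs_mult_right)

context
  fixes \<rho> :: "'a \<Rightarrow> 'a \<Rightarrow> bool"
  assumes \<rho>: "dl_congruence add mul \<rho>"
begin

lemma dl_congruence_mul_sandwich:
  assumes "A.absorbs (a \<otimes> b \<otimes> a) a"
  shows "\<rho> a (a \<otimes> b)"
proof -
  have equiv: "equivp \<rho>"
    and add: "\<And>x y z w. \<rho> x y \<Longrightarrow> \<rho> z w \<Longrightarrow> \<rho> (x \<oplus> z) (y \<oplus> w)"
    and mul: "\<And>x y z w. \<rho> x y \<Longrightarrow> \<rho> z w \<Longrightarrow> \<rho> (x \<otimes> z) (y \<otimes> w)"
    and add_commute: "\<And>x y. \<rho> (x \<oplus> y) (y \<oplus> x)"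
    and mul_commute: "\<And>x y. \<rho> (x \<otimes> y) (y \<otimes> x)"
    and absorption: "\<And>x y. \<rho> (x \<oplus> x \<otimes> y) x"
    using \<rho> unfolding dl_congruence_def semiring_congruence_def by blast+
  note refl = equivp_reflp[OF equiv] and trans = equivp_transp[OF equiv]
  have aba: "\<rho> (a \<otimes> b \<otimes> a) (a \<otimes> b)"
    using mul[OF refl mul_commute, of a b a] by (simp add: mul_assoc[symmetric] mul_idem)
  have "\<rho> (a \<otimes> b \<otimes> a \<oplus> a \<oplus> a \<otimes> b \<otimes> a) (a \<otimes> b \<oplus> a \<oplus> a \<otimes> b)"
    using add[OF aba add[OF refl aba]] .
  moreover have "\<rho> (a \<otimes> b \<oplus> a \<oplus> a \<otimes> b) (a \<oplus> a \<otimes> b)"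
    using add[OF add_commute refl, of "a \<otimes> b" a "a \<otimes> b"] by (simp add: add_assoc add_idem)
  ultimately have "\<rho> (a \<otimes> b \<otimes> a \<oplus> a \<oplus> a \<otimes> b \<otimes> a) a"
    using absorption trans by blast
  then have "\<rho> (a \<otimes> b \<otimes> a) a"
    using assms by (simp add: A.absorbs_def)
  then show ?thesis
    using aba trans equivp_symp[OF equiv] by blast
qed

lemma dl_congruence_if_absorb_equiv:
  assumes "M.absorb_equiv a b"
  shows "\<rho> a b"
proof -
  have "\<rho> a (a \<otimes> b)" and "\<rho> b (b \<otimes> a)"
    using assms unfolding M.absorb_equiv_def M.absorbs_def A.absorb_equiv_def
    by (auto intro: dl_congruence_mul_sandwich)
  moreover have "\<rho> (a \<otimes> b) (b \<otimes> a)"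
    using \<rho> unfolding dl_congruence_def by blast
  ultimately show ?thesis
    using \<rho> unfolding dl_congruence_def semiring_congruence_def
    by (meson equivp_symp equivp_transp)
qed

end

end

locale idem_semiring_sandwich = idem_semiring +
  assumes add_sandwich: "x \<oplus> x \<otimes> y \<otimes> x \<oplus> x = x"
begin

lemma A_absorbs_sandwich: "A.absorbs x (x \<otimes> y \<otimes> x)"
  by (simp add: A.absorbs_def add_sandwich)

lemma M_absorbs_iff: "M.absorbs a b \<longleftrightarrow> a \<otimes> b \<otimes> a = a \<otimes> b \<otimes> a \<oplus> a \<oplus> a \<otimes> b \<otimes> a"
  unfolding M.absorbs_def A.absorb_equiv_def using A_absorbs_sandwich
  by (auto simp: A.absorbs_def)

lemma M_absorbs_add_mono:
  assumes ab: "M.absorbs a b" and cd: "M.absorbs c d"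
  shows "M.absorbs (a \<oplus> c) (b \<oplus> d)"
proof -
  let ?p = "(a \<oplus> c) \<otimes> (b \<oplus> d) \<otimes> (a \<oplus> c)"
  have "A.absorbs ?p (a \<otimes> b \<otimes> a)" and "A.absorbs ?p (c \<otimes> d \<otimes> c)"
    by (intro A_absorbs_mult_mono A.absorbs_mult_factor_left A.absorbs_mult_factor_right)+
  moreover have "A.absorbs (a \<otimes> b \<otimes> a) a" and "A.absorbs (c \<otimes> d \<otimes> c) c"
    using ab cd by (simp_all add: M.absorbs_def A.absorb_equiv_def)
  ultimately have "A.absorbs ?p (a \<oplus> c)"
    by (meson A.absorbs_mult A.absorbs_trans)
  then show ?thesis
    by (simp add: M.absorbs_def A.absorb_equiv_def A_absorbs_sandwich)
qed

lemma M_absorb_equiv_add: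
  "M.absorb_equiv a b \<Longrightarrow> M.absorb_equiv c d \<Longrightarrow> M.absorb_equiv (a \<oplus> c) (b \<oplus> d)"
  by (simp add: M.absorb_equiv_def M_absorbs_add_mono)

lemma M_absorb_equiv_absorption: "M.absorb_equiv (x \<oplus> x \<otimes> y) x"
proof -
  have "x \<otimes> (x \<oplus> x \<otimes> y) = x \<oplus> x \<otimes> y"
    by (simp add: distrib_left mul_idem mul_assoc[symmetric])
  then have "(x \<oplus> x \<otimes> y) \<otimes> x \<otimes> (x \<oplus> x \<otimes> y) = x \<oplus> x \<otimes> y"
    by (simp add: mul_idem mul_assoc[symmetric])
  then have "M.absorbs (x \<oplus> x \<otimes> y) x"
    by (simp add: M.absorbs_def M.R_refl)
  moreover have "x \<otimes> (x \<oplus> x \<otimes> y) \<otimes> x = x \<oplus> x \<otimes> y \<otimes> x"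
    by (simp add: distrib_left distrib_right mul_idem mul_assoc[symmetric])
  moreover have "A.absorb_equiv (x \<oplus> x \<otimes> y \<otimes> x) x"
    by (simp add: A.absorb_equiv_def A.absorbs_mult_factor_left A.absorbs_mult
        A.absorbs_refl A_absorbs_sandwich)
  ultimately show ?thesis
    by (simp add: M.absorb_equiv_def M.absorbs_def)
qed

lemma dl_congruence_M_absorb_equiv: "dl_congruence add mul M.absorb_equiv"
  unfolding dl_congruence_def semiring_congruence_def
  using M.equivp_absorb_equiv M_absorb_equiv_add M.absorb_equiv_mult
    M.absorb_equiv_if_R[OF A.absorb_equiv_commute] M.absorb_equiv_commute
    M_absorb_equiv_absorption
  by blast

end

theorem theorem2p5:
  fixes add mul :: "'a \<Rightarrow> 'a \<Rightarrow> 'a"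
  assumes "idempotent_semiring add mul"
    and "\<forall>x y. add (add x (mul (mul x y) x)) x = x"
  defines "\<sigma> \<equiv> (\<lambda>a b.
      mul (mul a b) a = add (add (mul (mul a b) a) a) (mul (mul a b) a) \<and>
      mul (mul b a) b = add (add (mul (mul b a) b) b) (mul (mul b a) b))"
  shows "dl_congruence add mul \<sigma> \<and> (\<forall>\<rho>. dl_congruence add mul \<rho> \<longrightarrow> (\<forall>a b. \<sigma> a b \<longrightarrow> \<rho> a b))"
proof -
  interpret idem_semiring_sandwich add mul
    using assms(1,2) by unfold_locales (simp_all add: idempotent_semiring_def)
  have "\<sigma> = M.absorb_equiv"
    unfolding \<sigma>_def M.absorb_equiv_def M_absorbs_iff by (simp add: mul_assoc add_assoc)
  then show ?thesis
    using dl_congruence_M_absorb_equiv dl_congruence_if_absorb_equiv by blast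
qed

end
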